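(* Let $(x,y)$ be an $\mathbf{x}$-vertex of $R$ and let $x'$ be a vertex of $P_A$ adjacent to $x$ in $P_A$. Then the step from $x$ to $x'$ lifts to $R$ (i.e., there exists $y'$ with $(x',y')\in R$ and $\operatorname{supp}(y')=\operatorname{supp}(y)$) if and only if $ax'\in\operatorname{Band}_{\mathbf{x}}(y)$.
   Context: Let $A\in\mathbb{R}^{m_1\times n_1}$, nonzero $a\in\mathbb{R}^{1\times n_1}$, nonzero $b\in\mathbb{R}^{1\times n_2}$, $B\in\mathbb{R}^{m_2\times n_2}$, $c_A\in\mathbb{R}^{m_1}$, $c_B\in\mathbb{R}^{m_2}$, $c_a,c_b\in\mathbb{R}$, and $R=\{(x,y)\in\mathbb{R}^{n_1}\times\mathbb{R}^{n_2}: Ax=c_A,\ ax+by=c_a+c_b,\ By=c_B,\ x,y\ge 0\}$. Assume $R$ is simple (nondegenerate). Let $P_A=\{x: Ax=c_A, x\ge 0\}$ and $Q_B=\{y: By=c_B, y\ge 0\}$. A vertex $(x,y)$ of $R$ is an $\mathbf{x}$-vertex if $x$ is a vertex of $P_A$. For such a vertex, $\operatorname{Band}_{\mathbf{x}}(y):=\{c_a+c_b-bz : Bz=c_B,\ \operatorname{supp}(z)\subseteq\operatorname{supp}(y),\ z\ge 0\}\subseteq\mathbb{R}$, where $\operatorname{supp}$ denotes the set of indices of nonzero coordinates. *)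

theory Defs
  imports "HOL-Analysis.Analysis"
begin

text \<open>Vectors in R^n are modelled as real^'n; a row vector a is a vector and ax is a \<bullet> x.\<close>

definition supp :: "real^'n \<Rightarrow> 'n set" where
  "supp x = {i. x $ i \<noteq> 0}"

definition nonneg :: "real^'n \<Rightarrow> bool" where
  "nonneg x \<longleftrightarrow> (\<forall>i. 0 \<le> x $ i)"

definition std_poly :: "real^'n^'m \<Rightarrow> real^'m \<Rightarrow> (real^'n) set" where
  "std_poly A c = {x. A *v x = c \<and> nonneg x}"

definition R_set :: "real^'n1^'m1 \<Rightarrow> real^'n1 \<Rightarrow> real^'n2 \<Rightarrow> real^'n2^'m2
      \<Rightarrow> real^'m1 \<Rightarrow> real^'m2 \<Rightarrow> real \<Rightarrow> real \<Rightarrow> ((real^'n1) \<times> (real^'n2)) set" where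
  "R_set A a b B cA cB ca cb =
     {(x, y). A *v x = cA \<and> a \<bullet> x + b \<bullet> y = ca + cb \<and> B *v y = cB \<and> nonneg x \<and> nonneg y}"

definition R_rank :: "real^'n1^'m1 \<Rightarrow> real^'n1 \<Rightarrow> real^'n2 \<Rightarrow> real^'n2^'m2 \<Rightarrow> nat" where
  "R_rank A a b B = CARD('n1) + CARD('n2) -
     dim {(u, v). A *v u = 0 \<and> a \<bullet> u + b \<bullet> v = 0 \<and> B *v v = (0::real^'m2)}"

text \<open>R is simple (nondegenerate): every vertex (basic feasible solution) of R has exactly
  rank-many nonzero coordinates.\<close>
definition R_nondegenerate :: "real^'n1^'m1 \<Rightarrow> real^'n1 \<Rightarrow> real^'n2 \<Rightarrow> real^'n2^'m2
      \<Rightarrow> real^'m1 \<Rightarrow> real^'m2 \<Rightarrow> real \<Rightarrow> real \<Rightarrow> bool" where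
  "R_nondegenerate A a b B cA cB ca cb \<longleftrightarrow>
     (\<forall>x y. (x, y) extreme_point_of R_set A a b B cA cB ca cb \<longrightarrow>
        card (supp x) + card (supp y) = R_rank A a b B)"

definition adjacent_vertices :: "'a::euclidean_space set \<Rightarrow> 'a \<Rightarrow> 'a \<Rightarrow> bool" where
  "adjacent_vertices P v w \<longleftrightarrow>
     v extreme_point_of P \<and> w extreme_point_of P \<and> v \<noteq> w \<and>
     (\<exists>e. e face_of P \<and> aff_dim e = 1 \<and> v \<in> e \<and> w \<in> e)"

definition Band :: "real^'n2 \<Rightarrow> real^'n2^'m2 \<Rightarrow> real^'m2 \<Rightarrow> real \<Rightarrow> real \<Rightarrow> real^'n2 \<Rightarrow> real set" where
  "Band b B cB ca cb y = {ca + cb - b \<bullet> z | z. B *v z = cB \<and> supp z \<subseteq> supp y \<and> nonneg z}"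

end

theory Submission
  imports Defs
begin

text \<open>If \<open>a x' = c_a + c_b - b z\<close> with \<open>B z = c_B\<close>, \<open>z \<ge> 0\<close> and \<open>supp z \<subseteq> supp y\<close>, then
  \<open>(x', z) \<in> R\<close>. The columns of the constraint matrix of \<open>R\<close> indexed by \<open>supp x'\<close> and
  \<open>supp y\<close> are linearly independent: a kernel vector \<open>(u, v)\<close> supported there has \<open>u = 0\<close>
  because \<open>x'\<close> is a vertex of \<open>P_A\<close>, and then \<open>v = 0\<close> because \<open>(x, y) \<plusminus> t (0, v)\<close> would
  stay in \<open>R\<close>. Hence \<open>(x', z)\<close> is a vertex of \<open>R\<close>, and
  \<open>|supp x'| + |supp y| \<le> rank = |supp x'| + |supp z|\<close> by simplicity, forcing \<open>supp z = supp y\<close>.\<close>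

lemma eventually_nonneg_add_scaleR:
  fixes p u :: "real^'n"
  assumes "nonneg p" and "supp u \<subseteq> supp p"
  shows "eventually (\<lambda>t. nonneg (p + t *\<^sub>R u)) (nhds 0)"
  unfolding nonneg_def
proof (rule eventually_all_finite)
  fix i
  show "eventually (\<lambda>t. 0 \<le> (p + t *\<^sub>R u) $ i) (nhds 0)"
  proof (cases "u $ i = 0")
    case True
    then show ?thesis using assms(1) by (simp add: nonneg_def)
  next
    case False
    then have "0 < p $ i" using assms by (auto simp: supp_def nonneg_def less_le)
    have "((\<lambda>t. p $ i + t * u $ i) \<longlongrightarrow> p $ i) (nhds 0)"
      by (auto intro!: tendsto_eq_intros filterlim_ident)
    then have "eventually (\<lambda>t. 0 < p $ i + t * u $ i) (nhds 0)"
      using \<open>0 < p $ i\<close> by (rule order_tendstoD)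
    then show ?thesis by eventually_elim simp
  qed
qed

lemma extreme_point_of_perturbation_zero:
  fixes x w :: "'a::real_normed_vector"
  assumes "x extreme_point_of S" and "eventually (\<lambda>t. x + t *\<^sub>R w \<in> S) (nhds 0)"
  shows "w = 0"
proof (rule ccontr)
  assume "w \<noteq> 0"
  obtain d :: real where "d > 0" and d: "\<And>t. dist t 0 \<le> d \<Longrightarrow> x + t *\<^sub>R w \<in> S"
    using assms(2) by (auto simp: eventually_nhds_metric_le)
  have "x + d *\<^sub>R w \<noteq> x - d *\<^sub>R w"
    using \<open>d > 0\<close> \<open>w \<noteq> 0\<close> by (simp add: eq_neg_iff_add_eq_0 flip: scaleR_add_left)
  moreover have "x = midpoint (x + d *\<^sub>R w) (x - d *\<^sub>R w)"
    by (simp add: midpoint_def algebra_simps flip: scaleR_add_left)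
  ultimately have "x \<in> open_segment (x + d *\<^sub>R w) (x - d *\<^sub>R w)"
    by (metis midpoint_in_open_segment)
  moreover have "x + d *\<^sub>R w \<in> S" "x - d *\<^sub>R w \<in> S"
    using d[of d] d[of "-d"] \<open>d > 0\<close> by auto
  ultimately show False
    using assms(1) by (auto simp: extreme_point_of_def)
qed

lemma extreme_point_std_poly_kernel:
  fixes A :: "real^'n^'m" and x u :: "real^'n"
  assumes "x extreme_point_of std_poly A c" and "A *v u = 0" and "supp u \<subseteq> supp x"
  shows "u = 0"
proof (rule extreme_point_of_perturbation_zero[OF assms(1)])
  have "x \<in> std_poly A c"
    using assms(1) by (simp add: extreme_point_of_def)
  then have "A *v x = c" and "nonneg x"
    by (auto simp: std_poly_def)
  show "eventually (\<lambda>t. x + t *\<^sub>R u \<in> std_poly A c) (nhds 0)"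
    using eventually_nonneg_add_scaleR[OF \<open>nonneg x\<close> assms(3)]
    by eventually_elim (simp add: std_poly_def algebra_simps \<open>A *v x = c\<close> assms(2))
qed

text \<open>\<open>R_kernel A a b B \<inter> coord_subspace S T = {0}\<close> says that the columns of the constraint
  matrix of \<open>R\<close> indexed by \<open>S\<close> and \<open>T\<close> are linearly independent.\<close>

definition R_kernel :: "real^'n1^'m1 \<Rightarrow> real^'n1 \<Rightarrow> real^'n2 \<Rightarrow> real^'n2^'m2
      \<Rightarrow> ((real^'n1) \<times> (real^'n2)) set" where
  "R_kernel A a b B = {(u, v). A *v u = 0 \<and> a \<bullet> u + b \<bullet> v = 0 \<and> B *v v = 0}"

definition coord_subspace :: "'n1 set \<Rightarrow> 'n2 set \<Rightarrow> ((real^'n1) \<times> (real^'n2)) set" where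
  "coord_subspace S T = {(s, t). supp s \<subseteq> S \<and> supp t \<subseteq> T}"

lemma R_rank_eq: "R_rank A a b B = CARD('n1) + CARD('n2) - dim (R_kernel A a b B)"
  for A :: "real^'n1^'m1" and B :: "real^'n2^'m2"
  by (simp add: R_rank_def R_kernel_def)

lemma subspace_R_kernel: "subspace (R_kernel A a b B)"
  by (auto simp: subspace_def R_kernel_def zero_prod_def algebra_simps simp flip: distrib_left)

lemma supp_add_subset: "supp (p + q) \<subseteq> supp p \<union> supp q"
  by (auto simp: supp_def)

lemma supp_scaleR_subset: "supp (c *\<^sub>R p) \<subseteq> supp p"
  by (auto simp: supp_def)

lemma subspace_coord_subspace: "subspace (coord_subspace S T)"
proof (unfold subspace_def, intro conjI ballI allI)
  show "0 \<in> coord_subspace S T"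
    by (simp add: coord_subspace_def zero_prod_def supp_def)
next
  fix p q assume "p \<in> coord_subspace S T" "q \<in> coord_subspace S T"
  then show "p + q \<in> coord_subspace S T"
    by (auto simp: coord_subspace_def dest!: supp_add_subset[THEN subsetD])
next
  fix c p assume "p \<in> coord_subspace S T"
  then show "c *\<^sub>R p \<in> coord_subspace S T"
    by (auto simp: coord_subspace_def dest!: supp_scaleR_subset[THEN subsetD])
qed

lemma coord_subspace_mono: "S \<subseteq> S' \<Longrightarrow> T \<subseteq> T' \<Longrightarrow> coord_subspace S T \<subseteq> coord_subspace S' T'"
  by (auto simp: coord_subspace_def)

lemma card_le_dim_coord_subspace:
  fixes S :: "'n1::finite set" and T :: "'n2::finite set"
  shows "card S + card T \<le> dim (coord_subspace S T)"
proof -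
  define E where "E = (\<lambda>i. (axis i (1::real), 0::real^'n2)) ` S \<union> (\<lambda>j. (0::real^'n1, axis j 1)) ` T"
  have "independent E"
    by (rule independent_mono[OF independent_Basis]) (auto simp: E_def Basis_prod_def)
  moreover have "E \<subseteq> coord_subspace S T"
    by (auto simp: E_def coord_subspace_def supp_def axis_def split: if_splits)
  moreover have "card E = card S + card T"
    unfolding E_def
    by (subst card_Un_disjoint) (auto simp: card_image inj_on_def axis_eq_axis)
  ultimately show ?thesis
    using independent_card_le_dim by metis
qed

lemma card_le_R_rank:
  fixes A :: "real^'n1^'m1" and B :: "real^'n2^'m2"
  assumes "R_kernel A a b B \<inter> coord_subspace S T = {0}"
  shows "card S + card T \<le> R_rank A a b B"
proof -
  let ?N = "R_kernel A a b B" and ?E = "coord_subspace S T"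
  have "dim ?N + dim ?E = dim {p + q |p q. p \<in> ?N \<and> q \<in> ?E}"
    using dim_sums_Int[OF subspace_R_kernel subspace_coord_subspace, of A a b B S T] assms
    by simp
  also have "\<dots> \<le> CARD('n1) + CARD('n2)"
    using dim_subset_UNIV[of "{p + q |p q. p \<in> ?N \<and> q \<in> ?E}"] by simp
  finally show ?thesis
    using card_le_dim_coord_subspace[of S T] by (simp add: R_rank_eq)
qed

lemma extreme_point_R_set_kernel:
  assumes "(x, y) extreme_point_of R_set A a b B cA cB ca cb"
  shows "R_kernel A a b B \<inter> coord_subspace (supp x) (supp y) = {0}"
proof -
  have "(x, y) \<in> R_set A a b B cA cB ca cb"
    using assms by (simp add: extreme_point_of_def)
  then have R: "A *v x = cA" "a \<bullet> x + b \<bullet> y = ca + cb" "B *v y = cB" "nonneg x" "nonneg y"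
    by (auto simp: R_set_def)
  have "w = 0" if "w \<in> R_kernel A a b B" and "w \<in> coord_subspace (supp x) (supp y)" for w
  proof (rule extreme_point_of_perturbation_zero[OF assms])
    obtain u v where w: "w = (u, v)" by fastforce
    have K: "A *v u = 0" "a \<bullet> u + b \<bullet> v = 0" "B *v v = 0"
      using that(1) by (auto simp: w R_kernel_def)
    have "supp u \<subseteq> supp x" "supp v \<subseteq> supp y"
      using that(2) by (auto simp: w coord_subspace_def)
    with R(4,5) have "eventually (\<lambda>t. nonneg (x + t *\<^sub>R u) \<and> nonneg (y + t *\<^sub>R v)) (nhds 0)"
      by (intro eventually_conj eventually_nonneg_add_scaleR)
    then show "eventually (\<lambda>t. (x, y) + t *\<^sub>R w \<in> R_set A a b B cA cB ca cb) (nhds 0)"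
      by eventually_elim (simp add: w R_set_def R K algebra_simps flip: distrib_left)
  qed
  then show ?thesis
    using subspace_0[OF subspace_R_kernel] subspace_0[OF subspace_coord_subspace] by blast
qed

lemma supp_diff_subset_supp_convex_comb:
  fixes p q :: "real^'n"
  assumes "nonneg p" "nonneg q" "0 < t" "t < 1"
  shows "supp (q - p) \<subseteq> supp ((1 - t) *\<^sub>R p + t *\<^sub>R q)"
proof
  fix i assume "i \<in> supp (q - p)"
  moreover have "0 \<le> (1 - t) * p $ i" "0 \<le> t * q $ i"
    using assms by (auto simp: nonneg_def)
  ultimately show "i \<in> supp ((1 - t) *\<^sub>R p + t *\<^sub>R q)"
    using assms(3,4) by (auto simp: supp_def add_nonneg_eq_0_iff)
qed

lemma extreme_point_R_setI:
  assumes mem: "(x, y) \<in> R_set A a b B cA cB ca cb"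
    and indep: "R_kernel A a b B \<inter> coord_subspace (supp x) (supp y) \<subseteq> {0}"
  shows "(x, y) extreme_point_of R_set A a b B cA cB ca cb"
  unfolding extreme_point_of_def
proof (intro conjI mem ballI notI)
  fix p q assume "p \<in> R_set A a b B cA cB ca cb" "q \<in> R_set A a b B cA cB ca cb"
    and "(x, y) \<in> open_segment p q"
  then obtain p1 p2 q1 q2 t where pq: "p = (p1, p2)" "q = (q1, q2)" "p \<noteq> q"
    and t: "0 < t" "t < 1" and x: "x = (1 - t) *\<^sub>R p1 + t *\<^sub>R q1"
    and y: "y = (1 - t) *\<^sub>R p2 + t *\<^sub>R q2"
    and P: "A *v p1 = cA" "a \<bullet> p1 + b \<bullet> p2 = ca + cb" "B *v p2 = cB" "nonneg p1" "nonneg p2"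
    and Q: "A *v q1 = cA" "a \<bullet> q1 + b \<bullet> q2 = ca + cb" "B *v q2 = cB" "nonneg q1" "nonneg q2"
    by (cases p, cases q) (auto simp: in_segment R_set_def)
  have "(q1 - p1, q2 - p2) \<in> R_kernel A a b B"
    using P Q by (simp add: R_kernel_def algebra_simps)
  moreover have "(q1 - p1, q2 - p2) \<in> coord_subspace (supp x) (supp y)"
    unfolding coord_subspace_def x y
    using P Q t by (simp add: supp_diff_subset_supp_convex_comb)
  ultimately have "(q1 - p1, q2 - p2) = 0"
    using indep by blast
  then show False
    using pq by (simp add: zero_prod_def)
qed

lemma extreme_point_R_set_kernel_exchange:
  assumes "(x, y) extreme_point_of R_set A a b B cA cB ca cb"
    and "x' extreme_point_of std_poly A cA"
  shows "R_kernel A a b B \<inter> coord_subspace (supp x') (supp y) = {0}"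
proof -
  have "w = 0" if "w \<in> R_kernel A a b B" and "w \<in> coord_subspace (supp x') (supp y)" for w
  proof -
    obtain u v where w: "w = (u, v)" by fastforce
    have "u = 0"
      using that extreme_point_std_poly_kernel[OF assms(2)]
      by (auto simp: w R_kernel_def coord_subspace_def)
    then have "(0, v) \<in> R_kernel A a b B \<inter> coord_subspace (supp x) (supp y)"
      using that by (auto simp: w coord_subspace_def supp_def)
    then show "w = 0"
      using extreme_point_R_set_kernel[OF assms(1)] \<open>u = 0\<close> by (auto simp: w zero_prod_def)
  qed
  then show ?thesis
    using subspace_0[OF subspace_R_kernel] subspace_0[OF subspace_coord_subspace] by blast
qed

theorem lemma1:
  fixes A :: "real^'n1^'m1" and a :: "real^'n1" and b :: "real^'n2" and B :: "real^'n2^'m2"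
    and cA :: "real^'m1" and cB :: "real^'m2" and ca cb :: real
    and x x' :: "real^'n1" and y :: "real^'n2"
  assumes a_nz: "a \<noteq> 0" and b_nz: "b \<noteq> 0"
    and simple: "R_nondegenerate A a b B cA cB ca cb"
    and vert: "(x, y) extreme_point_of R_set A a b B cA cB ca cb"
    and xvert: "x extreme_point_of std_poly A cA"
    and adj: "adjacent_vertices (std_poly A cA) x x'"
  shows "(\<exists>y'. (x', y') \<in> R_set A a b B cA cB ca cb \<and> supp y' = supp y)
           \<longleftrightarrow> a \<bullet> x' \<in> Band b B cB ca cb y"
proof
  assume "\<exists>y'. (x', y') \<in> R_set A a b B cA cB ca cb \<and> supp y' = supp y"
  then show "a \<bullet> x' \<in> Band b B cB ca cb y"
    by (force simp: Band_def R_set_def)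
next
  assume "a \<bullet> x' \<in> Band b B cB ca cb y"
  then obtain z where z: "B *v z = cB" "supp z \<subseteq> supp y" "nonneg z" "a \<bullet> x' = ca + cb - b \<bullet> z"
    unfolding Band_def by blast
  have x'vert: "x' extreme_point_of std_poly A cA"
    using adj by (simp add: adjacent_vertices_def)
  then have zR: "(x', z) \<in> R_set A a b B cA cB ca cb"
    using z by (auto simp: R_set_def std_poly_def extreme_point_of_def)
  have K: "R_kernel A a b B \<inter> coord_subspace (supp x') (supp y) = {0}"
    using extreme_point_R_set_kernel_exchange[OF vert x'vert] .
  have "(x', z) extreme_point_of R_set A a b B cA cB ca cb"
    using K coord_subspace_mono[OF order_refl z(2)] by (intro extreme_point_R_setI[OF zR]) blast
  then have "card (supp x') + card (supp z) = R_rank A a b B"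
    using simple by (simp add: R_nondegenerate_def)
  moreover have "card (supp x') + card (supp y) \<le> R_rank A a b B"
    using card_le_R_rank[OF K] .
  ultimately have "supp z = supp y"
    using z(2) by (intro card_seteq) auto
  then show "\<exists>y'. (x', y') \<in> R_set A a b B cA cB ca cb \<and> supp y' = supp y"
    using zR by blast
qed

end
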